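(* Consider the two-level PFASST iteration for a linear problem with Gauss–Radau nodes and $L$ time steps as described in the context. Then PFASST converges if the CFL number $\mu$ is small enough. More precisely, there exist a fixed value $\mu^*_0>0$ and a constant $c>0$ independent of $\mu$ such that for all $0<\mu<\mu^*_0$, $$\rho\big(\mathbf{T}_{\mathrm{PFASST}}(\mu)\big)\le c\,\mu^{1/L},$$ where $\rho$ denotes the spectral radius.
   Context: Fix positive integers $L$ (time steps), $M$ (collocation nodes), $N$ (spatial degrees of freedom). Let $0<\tau_1<\dots<\tau_M=1$ be the (right) Gauss–Radau nodes on $[0,1]$, $\ell_j$ the Lagrange basis polynomials, $\mathbf{Q}=(q_{m,j})\in\mathbb{R}^{M\times M}$ with $q_{m,j}=\int_0^{\tau_m}\ell_j(s)\,ds$. Let $\mathbf{Q}_\Delta\in\mathbb{R}^{M\times M}$ be the lower-triangular weight matrix of a simpler quadrature rule. Let $\mathbf{A}\in\mathbb{C}^{N\times N}$ and $\mu>0$. Let $\mathbf{N}_M\in\mathbb{R}^{M\times M}$ have ones in its last column and zeros elsewhere, $\mathbf{H}=\mathbf{N}_M\otimes\mathbf{I}_N$, and $\mathbf{E}\in\mathbb{R}^{L\times L}$ with ones on the first subdiagonal and zeros elsewhere. Composite collocation matrix: $\mathbf{C}=\mathbf{I}_{LMN}-\mu\,\mathbf{I}_L\otimes\mathbf{Q}\otimes\mathbf{A}-\mathbf{E}\otimes\mathbf{H}$. Fine preconditioner: $\hat{\mathbf{P}}=\mathbf{I}_{LMN}-\mu\,\mathbf{I}_L\otimes\mathbf{Q}_\Delta\otimes\mathbf{A}$.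 Coarse level: integers $\tilde M\le M$, $\tilde N\le N$, $\tilde{\mathbf{Q}}_\Delta\in\mathbb{R}^{\tilde M\times\tilde M}$ lower triangular (simpler quadrature rule on the $\tilde M$ coarse Gauss–Radau nodes), $\tilde{\mathbf{A}}\in\mathbb{C}^{\tilde N\times\tilde N}$, $\tilde{\mathbf{N}}_{\tilde M}\in\mathbb{R}^{\tilde M\times\tilde M}$ with ones in its last column and zeros elsewhere, $\tilde{\mathbf{H}}=\tilde{\mathbf{N}}_{\tilde M}\otimes\mathbf{I}_{\tilde N}$, and coarse approximative block Gauss–Seidel preconditioner $\tilde{\mathbf{P}}=\mathbf{I}_{L\tilde M\tilde N}-\mu\,\mathbf{I}_L\otimes\tilde{\mathbf{Q}}_\Delta\otimes\tilde{\mathbf{A}}-\mathbf{E}\otimes\tilde{\mathbf{H}}$. Both $\hat{\mathbf{P}}$ and $\tilde{\mathbf{P}}$ are assumed invertible. Restriction and interpolation are $\mathbf{T}_F^C=\mathbf{I}_L\otimes\mathbf{T}_{F,Q}^C\otimes\mathbf{T}_{F,A}^C\in\mathbb{R}^{L\tilde M\tilde N\times LMN}$ and $\mathbf{T}_C^F=\mathbf{I}_L\otimes\mathbf{T}_{C,Q}^F\otimes\mathbf{T}_{C,A}^F\in\mathbb{R}^{LMN\times L\tilde M\tilde N}$ (no coarsening across time steps), where the restriction satisfies $(\mathbf{E}\otimes\tilde{\mathbf{H}})\mathbf{T}_F^C=\mathbf{T}_F^C(\mathbf{E}\otimes\mathbf{H})$. Smoother iteration matrix $\mathbf{T}_S(\mu)=\mathbf{I}_{LMN}-\hat{\mathbf{P}}^{-1}\mathbf{C}$,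 coarse-grid correction $\mathbf{T}_{\mathrm{CGC}}(\mu)=\mathbf{I}_{LMN}-\mathbf{T}_C^F\tilde{\mathbf{P}}^{-1}\mathbf{T}_F^C\mathbf{C}$, and PFASST iteration matrix $\mathbf{T}_{\mathrm{PFASST}}(\mu)=\mathbf{T}_S(\mu)\,\mathbf{T}_{\mathrm{CGC}}(\mu)$. *)

theory Defs
  imports "HOL-Analysis.Analysis"
          "Jordan_Normal_Form.Spectral_Radius"
          "Jordan_Normal_Form.Gauss_Jordan_Elimination"
begin

definition kron :: "'a :: times mat \<Rightarrow> 'a mat \<Rightarrow> 'a mat" where
  "kron A B = mat (dim_row A * dim_row B) (dim_col A * dim_col B)
     (\<lambda>(i, j). A $$ (i div dim_row B, j div dim_col B) * B $$ (i mod dim_row B, j mod dim_col B))"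

definition minv :: "complex mat \<Rightarrow> complex mat" where
  "minv A = the (mat_inverse A)"

definition cmat :: "real mat \<Rightarrow> complex mat" where
  "cmat A = map_mat complex_of_real A"

definition lagrange_basis :: "nat \<Rightarrow> (nat \<Rightarrow> real) \<Rightarrow> nat \<Rightarrow> real \<Rightarrow> real" where
  "lagrange_basis M tau j s = (\<Prod>k\<in>{0..<M} - {j}. (s - tau k) / (tau j - tau k))"

(* Right Gauss--Radau nodes on [0,1] (0-based): M distinct increasing nodes in (0,1] with
   tau_{M-1} = 1 whose interpolatory quadrature rule (weights = integrals of the Lagrange basis
   over [0,1]) is exact for all polynomials of degree at most 2M-2. This is the defining property
   of (right) Gauss--Radau quadrature; it determines the nodes uniquely. *)
definition gauss_radau_nodes :: "nat \<Rightarrow> (nat \<Rightarrow> real) \<Rightarrow> bool" where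
  "gauss_radau_nodes M tau \<longleftrightarrow>
     0 < tau 0 \<and> (\<forall>m. Suc m < M \<longrightarrow> tau m < tau (Suc m)) \<and> tau (M - 1) = 1 \<and>
     (\<forall>p :: real poly. degree p \<le> 2 * M - 2 \<longrightarrow>
        integral {0..1} (poly p) = (\<Sum>j<M. integral {0..1} (lagrange_basis M tau j) * poly p (tau j)))"

definition coll_Q :: "nat \<Rightarrow> (nat \<Rightarrow> real) \<Rightarrow> real mat" where
  "coll_Q M tau = mat M M (\<lambda>(m, j). integral {0..tau m} (lagrange_basis M tau j))"

definition last_col_ones :: "nat \<Rightarrow> real mat" where
  "last_col_ones M = mat M M (\<lambda>(i, j). if j = M - 1 then 1 else 0)"

definition subdiag :: "nat \<Rightarrow> real mat" where
  "subdiag L = mat L L (\<lambda>(i, j). if i = j + 1 then 1 else 0)"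

definition lower_triangular :: "'a :: zero mat \<Rightarrow> bool" where
  "lower_triangular A \<longleftrightarrow> (\<forall>i j. i < dim_row A \<longrightarrow> j < dim_col A \<longrightarrow> i < j \<longrightarrow> A $$ (i, j) = 0)"

definition coll_C :: "nat \<Rightarrow> nat \<Rightarrow> nat \<Rightarrow> real mat \<Rightarrow> complex mat \<Rightarrow> real \<Rightarrow> complex mat" where
  "coll_C L M N Q A mu =
     1\<^sub>m (L * M * N)
     - complex_of_real mu \<cdot>\<^sub>m kron (kron (1\<^sub>m L) (cmat Q)) A
     - kron (cmat (subdiag L)) (kron (cmat (last_col_ones M)) (1\<^sub>m N))"

definition prec_fine :: "nat \<Rightarrow> nat \<Rightarrow> nat \<Rightarrow> real mat \<Rightarrow> complex mat \<Rightarrow> real \<Rightarrow> complex mat" where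
  "prec_fine L M N QD A mu =
     1\<^sub>m (L * M * N) - complex_of_real mu \<cdot>\<^sub>m kron (kron (1\<^sub>m L) (cmat QD)) A"

definition prec_coarse :: "nat \<Rightarrow> nat \<Rightarrow> nat \<Rightarrow> real mat \<Rightarrow> complex mat \<Rightarrow> real \<Rightarrow> complex mat" where
  "prec_coarse L Mc Nc QDc Ac mu =
     1\<^sub>m (L * Mc * Nc)
     - complex_of_real mu \<cdot>\<^sub>m kron (kron (1\<^sub>m L) (cmat QDc)) Ac
     - kron (cmat (subdiag L)) (kron (cmat (last_col_ones Mc)) (1\<^sub>m Nc))"

end

theory Submission
  imports Defs
begin

(* At mu = 0 the fine preconditioner is the identity, so the smoother iteration matrix is E (x) H;
   and since restriction intertwines E (x) H with E (x) H~, the coarse preconditioner I - E (x) H~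
   inverts the restricted collocation matrix exactly, so the coarse-grid correction is
   I - T_C^F T_F^C. Their product T0 only maps time step l into time steps > l, hence T0^L = 0.
   For small mu both preconditioner inverses stay uniformly bounded, so T(mu) = T0 + O(mu) in the
   entrywise l1 norm, and rho(T(mu))^L <= |T(mu)^L| = |T(mu)^L - T0^L| = O(mu). *)

definition entry_norm :: "'a :: real_normed_field mat \<Rightarrow> real" where
  "entry_norm X = (\<Sum>i<dim_row X. \<Sum>j<dim_col X. norm (X $$ (i,j)))"

lemma entry_norm_nonneg: "0 \<le> entry_norm X"
  unfolding entry_norm_def by (intro sum_nonneg) auto

lemma entry_norm_smult [simp]: "entry_norm (c \<cdot>\<^sub>m X) = norm c * entry_norm X"
  unfolding entry_norm_def by (simp add: sum_distrib_left norm_mult)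

lemma entry_norm_one [simp]: "entry_norm (1\<^sub>m n :: 'a :: real_normed_field mat) = real n"
proof -
  have "entry_norm (1\<^sub>m n :: 'a mat) = (\<Sum>i<n. \<Sum>j<n. if i = j then 1 else 0)"
    unfolding entry_norm_def by (intro sum.cong) auto
  then show ?thesis by simp
qed

lemma entry_norm_add_le:
  assumes "X \<in> carrier_mat a b" "Y \<in> carrier_mat a b"
  shows "entry_norm (X + Y) \<le> entry_norm X + entry_norm Y"
proof -
  have "entry_norm (X + Y) = (\<Sum>i<a. \<Sum>j<b. norm (X $$ (i,j) + Y $$ (i,j)))"
    unfolding entry_norm_def using assms by (intro sum.cong) auto
  also have "\<dots> \<le> (\<Sum>i<a. \<Sum>j<b. norm (X $$ (i,j)) + norm (Y $$ (i,j)))"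
    by (intro sum_mono norm_triangle_ineq)
  also have "\<dots> = entry_norm X + entry_norm Y"
    unfolding entry_norm_def using assms by (simp add: sum.distrib)
  finally show ?thesis .
qed

lemma entry_norm_diff_le:
  assumes "X \<in> carrier_mat a b" "Y \<in> carrier_mat a b"
  shows "entry_norm (X - Y) \<le> entry_norm X + entry_norm Y"
proof -
  have "X - Y = X + (-1) \<cdot>\<^sub>m Y"
    using assms by (intro eq_matI) auto
  then show ?thesis
    using entry_norm_add_le[OF assms(1) smult_carrier_mat[OF assms(2)], of "-1"] by simp
qed

lemma entry_norm_le_diff_add:
  assumes "X \<in> carrier_mat a b" "Y \<in> carrier_mat a b"
  shows "entry_norm X \<le> entry_norm (X - Y) + entry_norm Y"
proof -
  have "X = (X - Y) + Y"
    using assms by (intro eq_matI) auto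
  moreover have "X - Y \<in> carrier_mat a b" by (rule minus_carrier_mat[OF assms(2)])
  ultimately show ?thesis
    using entry_norm_add_le[of "X - Y" a b Y] assms(2) by simp
qed

lemma entry_norm_mult_le:
  assumes X: "X \<in> carrier_mat a b" and Y: "Y \<in> carrier_mat b c"
  shows "entry_norm (X * Y) \<le> entry_norm X * entry_norm Y"
proof -
  have row_le: "(\<Sum>j<c. norm (Y $$ (k,j))) \<le> entry_norm Y" if "k < b" for k
    using that unfolding entry_norm_def carrier_matD[OF Y]
    by (intro member_le_sum[of k "{..<b}" "\<lambda>k. \<Sum>j<c. norm (Y $$ (k,j))"]) (auto intro: sum_nonneg)
  have entry: "(X * Y) $$ (i,j) = (\<Sum>k<b. X $$ (i,k) * Y $$ (k,j))" if "i < a" "j < c" for i j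
    using X Y that by (simp add: scalar_prod_def lessThan_atLeast0)
  have "entry_norm (X * Y) = (\<Sum>i<a. \<Sum>j<c. norm (\<Sum>k<b. X $$ (i,k) * Y $$ (k,j)))"
    unfolding entry_norm_def carrier_matD[OF mult_carrier_mat[OF X Y]]
    by (intro sum.cong refl) (simp add: entry)
  also have "\<dots> \<le> (\<Sum>i<a. \<Sum>j<c. \<Sum>k<b. norm (X $$ (i,k)) * norm (Y $$ (k,j)))"
    by (intro sum_mono order.trans[OF norm_sum]) (simp add: norm_mult)
  also have "\<dots> = (\<Sum>i<a. \<Sum>k<b. norm (X $$ (i,k)) * (\<Sum>j<c. norm (Y $$ (k,j))))"
    by (simp add: sum_distrib_left sum.swap[of _ "{..<c}"])
  also have "\<dots> \<le> (\<Sum>i<a. \<Sum>k<b. norm (X $$ (i,k)) * entry_norm Y)"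
    by (intro sum_mono mult_left_mono row_le) auto
  also have "\<dots> = entry_norm X * entry_norm Y"
    unfolding entry_norm_def using X by (simp add: sum_distrib_right)
  finally show ?thesis .
qed

lemma entry_norm_pow_le:
  assumes X: "X \<in> carrier_mat n n" and S: "entry_norm X \<le> S"
  shows "entry_norm (X ^\<^sub>m k) \<le> real n * S ^ k"
proof (induct k)
  case 0
  show ?case using X by simp
next
  case (Suc k)
  have "entry_norm (X ^\<^sub>m Suc k) \<le> entry_norm (X ^\<^sub>m k) * entry_norm X"
    using X by (simp add: entry_norm_mult_le[of _ n n _ n])
  also have "\<dots> \<le> (real n * S ^ k) * S"
    using Suc S order.trans[OF entry_norm_nonneg S] by (intro mult_mono) (auto simp: entry_norm_nonneg)
  finally show ?case by (simp add: ac_simps)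
qed

lemma entry_norm_pow_diff_le:
  assumes X: "X \<in> carrier_mat n n" and Y: "Y \<in> carrier_mat n n"
    and SX: "entry_norm X \<le> S" and SY: "entry_norm Y \<le> S" and S1: "1 \<le> S"
  shows "entry_norm (Y ^\<^sub>m k - X ^\<^sub>m k) \<le> real k * real n * S ^ k * entry_norm (Y - X)"
proof (induct k)
  case 0
  show ?case using X Y by (simp add: entry_norm_def)
next
  case (Suc k)
  have Yk: "Y ^\<^sub>m k \<in> carrier_mat n n" and Xk: "X ^\<^sub>m k \<in> carrier_mat n n"
    using X Y by auto
  have "(Y ^\<^sub>m k - X ^\<^sub>m k) * Y + X ^\<^sub>m k * (Y - X)
      = (Y ^\<^sub>m k * Y - X ^\<^sub>m k * Y) + (X ^\<^sub>m k * Y - X ^\<^sub>m k * X)"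
    using minus_mult_distrib_mat[OF Yk Xk Y] mult_minus_distrib_mat[OF Xk Y X] by simp
  also have "\<dots> = Y ^\<^sub>m Suc k - X ^\<^sub>m Suc k"
    using Yk Xk X Y by (intro eq_matI) auto
  finally have split: "Y ^\<^sub>m Suc k - X ^\<^sub>m Suc k = (Y ^\<^sub>m k - X ^\<^sub>m k) * Y + X ^\<^sub>m k * (Y - X)" ..
  have "entry_norm (Y ^\<^sub>m Suc k - X ^\<^sub>m Suc k)
      \<le> entry_norm (Y ^\<^sub>m k - X ^\<^sub>m k) * entry_norm Y + entry_norm (X ^\<^sub>m k) * entry_norm (Y - X)"
    unfolding split using Yk Xk X Y
    by (intro order.trans[OF entry_norm_add_le[of _ n n]] add_mono entry_norm_mult_le[of _ n n _ n]) auto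
  also have "\<dots> \<le> (real k * real n * S ^ k * entry_norm (Y - X)) * S
      + (real n * S ^ Suc k) * entry_norm (Y - X)"
  proof (intro add_mono mult_mono)
    have "S ^ k \<le> S ^ Suc k" using S1 by simp
    then show "entry_norm (X ^\<^sub>m k) \<le> real n * S ^ Suc k"
      using entry_norm_pow_le[OF X SX, of k] by (meson mult_left_mono of_nat_0_le_iff order.trans)
  qed (use Suc SY S1 in \<open>auto simp: entry_norm_nonneg\<close>)
  also have "\<dots> = real (Suc k) * real n * S ^ Suc k * entry_norm (Y - X)"
    by (simp add: algebra_simps)
  finally show ?case .
qed

lemma eigenvalue_pow_le_entry_norm:
  assumes A: "A \<in> carrier_mat n n" and ev: "eigenvalue A l"
  shows "norm l ^ k \<le> entry_norm (A ^\<^sub>m k)"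
proof -
  from ev obtain v :: "'a vec" where evv: "eigenvector A v l" unfolding eigenvalue_def by auto
  have v: "v \<in> carrier_vec n" and v0: "v \<noteq> 0\<^sub>v n"
    using evv A unfolding eigenvector_def by auto
  have Ak: "A ^\<^sub>m k \<in> carrier_mat n n" using A by auto
  define m where "m = Max ((\<lambda>j. norm (v $ j)) ` {..<n})"
  obtain j0 where j0: "j0 < n" "v $ j0 \<noteq> 0"
    using v v0 by (metis eq_vecI carrier_vecD index_zero_vec(1) index_zero_vec(2))
  then have "(\<lambda>j. norm (v $ j)) ` {..<n} \<noteq> {}" by auto
  from Max_in[OF _ this] obtain i0 where i0: "i0 < n" "norm (v $ i0) = m"
    unfolding m_def by auto
  have m_ge: "norm (v $ j) \<le> m" if "j < n" for j
    unfolding m_def using that by (intro Max_ge) auto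
  have m_pos: "0 < m" using m_ge[OF j0(1)] j0(2) by (smt (verit) zero_less_norm_iff)
  have "norm l ^ k * m = norm ((A ^\<^sub>m k *\<^sub>v v) $ i0)"
    using i0 v by (simp add: eigenvector_pow[OF A evv] norm_mult norm_power)
  also have "(A ^\<^sub>m k *\<^sub>v v) $ i0 = (\<Sum>j<n. (A ^\<^sub>m k) $$ (i0,j) * v $ j)"
    using i0 v Ak A by (auto simp: scalar_prod_def lessThan_atLeast0 intro!: sum.cong)
  also have "norm \<dots> \<le> (\<Sum>j<n. norm ((A ^\<^sub>m k) $$ (i0,j))) * m"
    unfolding sum_distrib_right
    by (intro order.trans[OF norm_sum] sum_mono) (simp add: norm_mult mult_left_mono m_ge)
  also have "\<dots> \<le> entry_norm (A ^\<^sub>m k) * m"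
    using i0 m_pos unfolding entry_norm_def carrier_matD[OF Ak]
    by (intro mult_right_mono member_le_sum[of i0 "{..<n}" "\<lambda>i. \<Sum>j<n. norm ((A ^\<^sub>m k) $$ (i,j))"])
      (auto intro: sum_nonneg)
  finally show ?thesis using m_pos by simp
qed

lemma spectral_radius_pow_le_entry_norm:
  assumes A: "A \<in> carrier_mat n n" and n: "0 < n"
  shows "spectral_radius A ^ k \<le> entry_norm (A ^\<^sub>m k)"
proof -
  obtain l where "l \<in> spectrum A" "spectral_radius A = norm l"
    using spectral_radius_mem_max(1)[OF A n] by auto
  then show ?thesis using eigenvalue_pow_le_entry_norm[OF A] unfolding spectrum_def by auto
qed

lemma dim_kron [simp]:
  "dim_row (kron X Y) = dim_row X * dim_row Y" "dim_col (kron X Y) = dim_col X * dim_col Y"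
  unfolding kron_def by auto

lemma index_kron:
  "i < dim_row X * dim_row Y \<Longrightarrow> j < dim_col X * dim_col Y \<Longrightarrow>
   kron X Y $$ (i,j) = X $$ (i div dim_row Y, j div dim_col Y) * Y $$ (i mod dim_row Y, j mod dim_col Y)"
  unfolding kron_def by simp

lemma dim_cmat [simp]: "dim_row (cmat X) = dim_row X" "dim_col (cmat X) = dim_col X"
  unfolding cmat_def by auto

lemma index_cmat: "i < dim_row X \<Longrightarrow> j < dim_col X \<Longrightarrow> cmat X $$ (i,j) = of_real (X $$ (i,j))"
  unfolding cmat_def by simp

lemma dim_subdiag [simp]: "dim_row (subdiag L) = L" "dim_col (subdiag L) = L"
  unfolding subdiag_def by auto

lemma dim_last_col_ones [simp]: "dim_row (last_col_ones M) = M" "dim_col (last_col_ones M) = M"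
  unfolding last_col_ones_def by auto

lemma dim_coll_Q [simp]: "dim_row (coll_Q M tau) = M" "dim_col (coll_Q M tau) = M"
  unfolding coll_Q_def by auto

lemma kron_carrier_mat:
  "X \<in> carrier_mat a b \<Longrightarrow> Y \<in> carrier_mat c d \<Longrightarrow> kron X Y \<in> carrier_mat (a * c) (b * d)"
  by (intro carrier_matI) auto

lemma cmat_carrier_mat: "X \<in> carrier_mat a b \<Longrightarrow> cmat X \<in> carrier_mat a b"
  by (intro carrier_matI) auto

lemma coll_Q_carrier_mat: "coll_Q M tau \<in> carrier_mat M M"
  by (intro carrier_matI) auto

lemma subdiag_carrier_mat: "subdiag L \<in> carrier_mat L L"
  by (intro carrier_matI) auto

lemma last_col_ones_carrier_mat: "last_col_ones M \<in> carrier_mat M M"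
  by (intro carrier_matI) auto

(* With row blocks of size a and column blocks of size b, entry (i, j) couples time step
   j div b to time step i div a; X only moves information at least d steps forward in time. *)
definition block_lower :: "nat \<Rightarrow> nat \<Rightarrow> nat \<Rightarrow> 'a :: zero mat \<Rightarrow> bool" where
  "block_lower a b d X \<longleftrightarrow>
     (\<forall>i<dim_row X. \<forall>j<dim_col X. X $$ (i,j) \<noteq> 0 \<longrightarrow> j div b + d \<le> i div a)"

lemma block_lowerD:
  "block_lower a b d X \<Longrightarrow> i < dim_row X \<Longrightarrow> j < dim_col X \<Longrightarrow> X $$ (i,j) \<noteq> 0 \<Longrightarrow> j div b + d \<le> i div a"
  unfolding block_lower_def by blast

lemma block_lower_one: "block_lower a a 0 (1\<^sub>m n)"
  unfolding block_lower_def by auto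

lemma block_lower_mult:
  fixes X Y :: "'a :: comm_ring_1 mat"
  assumes X: "X \<in> carrier_mat r s" and Y: "Y \<in> carrier_mat s t"
    and "block_lower a c d X" and "block_lower c b e Y"
  shows "block_lower a b (d + e) (X * Y)"
  unfolding block_lower_def
proof (intro allI impI)
  fix i j assume "i < dim_row (X * Y)" "j < dim_col (X * Y)" and nz: "(X * Y) $$ (i,j) \<noteq> 0"
  then have i: "i < r" and j: "j < t" using X Y by auto
  have "(\<Sum>k<s. X $$ (i,k) * Y $$ (k,j)) \<noteq> 0"
    using nz X Y i j by (simp add: scalar_prod_def lessThan_atLeast0)
  then obtain k where k: "k < s" "X $$ (i,k) \<noteq> 0" "Y $$ (k,j) \<noteq> 0"
    by (metis (no_types, lifting) lessThan_iff mult_not_zero sum.not_neutral_contains_not_neutral)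
  have "k div c + d \<le> i div a" using assms(3) i k X by (intro block_lowerD) auto
  moreover have "j div b + e \<le> k div c" using assms(4) j k Y by (intro block_lowerD) auto
  ultimately show "j div b + (d + e) \<le> i div a" by linarith
qed

lemma block_lower_diff:
  fixes X Y :: "'a :: ab_group_add mat"
  assumes X: "X \<in> carrier_mat r s" and Y: "Y \<in> carrier_mat r s"
    and "block_lower a b d X" "block_lower a b d Y"
  shows "block_lower a b d (X - Y)"
  unfolding block_lower_def
proof (intro allI impI)
  fix i j assume "i < dim_row (X - Y)" "j < dim_col (X - Y)" and nz: "(X - Y) $$ (i,j) \<noteq> 0"
  then have ij: "i < r" "j < s" using X Y by auto
  then have "X $$ (i,j) \<noteq> 0 \<or> Y $$ (i,j) \<noteq> 0" using nz X Y by auto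
  then show "j div b + d \<le> i div a"
    using assms(3,4) ij X Y by (auto intro: block_lowerD)
qed

lemma block_lower_pow:
  fixes X :: "'a :: comm_ring_1 mat"
  assumes X: "X \<in> carrier_mat n n" and "block_lower a a d X"
  shows "block_lower a a (k * d) (X ^\<^sub>m k)"
proof (induct k)
  case 0
  then show ?case using block_lower_one by simp
next
  case (Suc k)
  then show ?case
    using block_lower_mult[OF pow_carrier_mat[OF X] X Suc assms(2)] by (simp add: add.commute)
qed

lemma block_lower_pow_eq_zero:
  fixes X :: "'a :: comm_ring_1 mat"
  assumes X: "X \<in> carrier_mat n n" and n: "n \<le> L * a" and "block_lower a a 1 X"
  shows "X ^\<^sub>m L = 0\<^sub>m n n"
proof (rule eq_matI)
  fix i j assume ij: "i < dim_row (0\<^sub>m n n :: 'a mat)" "j < dim_col (0\<^sub>m n n :: 'a mat)"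
  then have "i div a < L" using n by (simp add: less_mult_imp_div_less mult.commute)
  moreover have "(X ^\<^sub>m L) $$ (i,j) \<noteq> 0 \<Longrightarrow> j div a + L \<le> i div a"
    using block_lower_pow[OF X assms(3), of L] ij X by (intro block_lowerD) auto
  ultimately show "(X ^\<^sub>m L) $$ (i,j) = 0\<^sub>m n n $$ (i,j)" using ij by fastforce
qed (use X in auto)

lemma block_lower_kron_one:
  fixes X :: "'a :: semiring_1 mat"
  shows "block_lower (dim_row X) (dim_col X) 0 (kron (1\<^sub>m L) X)"
  unfolding block_lower_def
proof (intro allI impI)
  fix i j assume "i < dim_row (kron (1\<^sub>m L) X)" "j < dim_col (kron (1\<^sub>m L) X)"
    and nz: "kron (1\<^sub>m L) X $$ (i,j) \<noteq> 0"
  then have i: "i < L * dim_row X" and j: "j < L * dim_col X" by auto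
  then have "i div dim_row X < L" "j div dim_col X < L"
    by (metis less_mult_imp_div_less mult.commute)+
  then show "j div dim_col X + 0 \<le> i div dim_row X"
    using nz i j by (auto simp: index_kron split: if_splits)
qed

lemma block_lower_kron_subdiag:
  assumes Y: "Y \<in> carrier_mat k k"
  shows "block_lower k k 1 (kron (cmat (subdiag L)) Y)"
  unfolding block_lower_def
proof (intro allI impI)
  fix i j assume "i < dim_row (kron (cmat (subdiag L)) Y)" "j < dim_col (kron (cmat (subdiag L)) Y)"
    and nz: "kron (cmat (subdiag L)) Y $$ (i,j) \<noteq> 0"
  then have i: "i < L * k" and j: "j < L * k" using Y by auto
  then have "i div k < L" "j div k < L"
    by (metis less_mult_imp_div_less mult.commute)+
  then have "subdiag L $$ (i div k, j div k) \<noteq> 0"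
    using nz i j Y by (auto simp: index_kron index_cmat)
  then show "j div k + 1 \<le> i div k"
    using \<open>i div k < L\<close> \<open>j div k < L\<close> unfolding subdiag_def by (auto split: if_splits)
qed

lemma one_minus_block_lower_left_inverse:
  fixes F :: "'a :: field mat"
  assumes F: "F \<in> carrier_mat n n" and "block_lower a a 1 F"
  obtains G where "G \<in> carrier_mat n n" "G * (1\<^sub>m n - F) = 1\<^sub>m n"
proof -
  have F_upper: "F $$ (i,j) = 0" if "i < n" "j < n" "i \<le> j" for i j
    using block_lowerD[OF assms(2), of i j] div_le_mono[OF \<open>i \<le> j\<close>, of a] that F by fastforce
  have D: "1\<^sub>m n - F \<in> carrier_mat n n" using minus_carrier_mat[OF F] .
  have "det (1\<^sub>m n - F) = prod_list (diag_mat (1\<^sub>m n - F))"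
    using F F_upper by (intro det_lower_triangular[OF _ D]) auto
  also have "diag_mat (1\<^sub>m n - F) = replicate n 1"
    using F F_upper by (intro nth_equalityI) (auto simp: diag_mat_def)
  finally have "det (1\<^sub>m n - F) \<noteq> 0" by simp
  from det_non_zero_imp_unit[OF D this, of "()"] show ?thesis
    using that unfolding Units_def ring_mat_def by auto
qed

lemma invertible_mat_minv:
  assumes X: "X \<in> carrier_mat n n" and "invertible_mat X"
  shows "minv X \<in> carrier_mat n n" "minv X * X = 1\<^sub>m n" "X * minv X = 1\<^sub>m n"
proof -
  obtain B where XB: "X * B = 1\<^sub>m n" and BX: "B * X = 1\<^sub>m (dim_row B)"
    using assms(2) X unfolding invertible_mat_def inverts_mat_def by auto
  then have B: "B \<in> carrier_mat n n"
    using X by (metis carrier_matD carrier_matI index_mult_mat(3) index_one_mat(3))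
  have "X \<in> Units (ring_mat TYPE(complex) n ())"
    unfolding Units_def ring_mat_def using X B XB BX by auto
  then obtain Y where "mat_inverse X = Some Y"
    using mat_inverse(1)[OF X] by fastforce
  with mat_inverse(2)[OF X this] show "minv X \<in> carrier_mat n n" "minv X * X = 1\<^sub>m n" "X * minv X = 1\<^sub>m n"
    unfolding minv_def by auto
qed

lemma entry_norm_le_double:
  fixes X Z :: "'a :: real_normed_field mat"
  assumes X: "X \<in> carrier_mat a b" and Z: "Z \<in> carrier_mat a b"
    and eq: "X - c \<cdot>\<^sub>m Z = Y"
    and Z_le: "entry_norm Z \<le> w * entry_norm X" and small: "norm c * w \<le> 1/2"
  shows "entry_norm X \<le> 2 * entry_norm Y"
proof -
  have "entry_norm X \<le> entry_norm Y + norm c * entry_norm Z"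
    using entry_norm_le_diff_add[OF X smult_carrier_mat[OF Z, of c]] eq by simp
  also have "norm c * entry_norm Z \<le> norm c * w * entry_norm X"
    using mult_left_mono[OF Z_le norm_ge_zero, of c] by (simp add: mult.assoc)
  also have "\<dots> \<le> 1/2 * entry_norm X"
    by (rule mult_right_mono[OF small entry_norm_nonneg])
  finally show ?thesis by linarith
qed

lemma entry_norm_inverse_perturbed_le:
  fixes D B G X :: "'a :: real_normed_field mat"
  assumes D: "D \<in> carrier_mat n n" and B: "B \<in> carrier_mat n n"
    and G: "G \<in> carrier_mat n n" and X: "X \<in> carrier_mat n n"
    and G_inv: "G * D = 1\<^sub>m n" and X_inv: "(D - c \<cdot>\<^sub>m B) * X = 1\<^sub>m n"
    and small: "norm c * (entry_norm G * entry_norm B) \<le> 1/2"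
  shows "entry_norm X \<le> 2 * entry_norm G"
proof -
  have GB: "G * B \<in> carrier_mat n n" using G B by simp
  have "G * (D - c \<cdot>\<^sub>m B) = 1\<^sub>m n - c \<cdot>\<^sub>m (G * B)"
    using mult_minus_distrib_mat[OF G D smult_carrier_mat[OF B]] G_inv G B by (simp add: mult_smult_distrib)
  then have "G * (D - c \<cdot>\<^sub>m B) * X = X - c \<cdot>\<^sub>m (G * B * X)"
    using minus_mult_distrib_mat[OF one_carrier_mat smult_carrier_mat[OF GB] X] X GB
    by (simp add: mult_smult_assoc_mat)
  moreover have "G * (D - c \<cdot>\<^sub>m B) * X = G"
    using X_inv G by (simp add: assoc_mult_mat[OF G minus_carrier_mat[OF smult_carrier_mat[OF B]] X])
  ultimately have "X - c \<cdot>\<^sub>m (G * B * X) = G" by simp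
  then show ?thesis
    using entry_norm_mult_le[OF GB X] entry_norm_mult_le[OF G B] small GB X
    by (intro entry_norm_le_double[OF X, of "G * B * X" c G "entry_norm G * entry_norm B"])
      (auto intro: order.trans mult_right_mono entry_norm_nonneg)
qed

lemma entry_norm_mult_diff_le:
  fixes X X0 Y Y0 :: "'a :: real_normed_field mat"
  assumes X: "X \<in> carrier_mat a b" "X0 \<in> carrier_mat a b"
    and Y: "Y \<in> carrier_mat b c" "Y0 \<in> carrier_mat b c"
    and dX: "entry_norm (X - X0) \<le> e * p" and dY: "entry_norm (Y - Y0) \<le> e * q"
    and e: "0 \<le> e" "e \<le> 1" and pq: "0 \<le> p" "0 \<le> q"
  shows "entry_norm (X * Y - X0 * Y0) \<le> e * (p * (q + entry_norm Y0) + entry_norm X0 * q)"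
proof -
  have "(X - X0) * Y + X0 * (Y - Y0) = (X * Y - X0 * Y) + (X0 * Y - X0 * Y0)"
    using minus_mult_distrib_mat[OF X Y(1)] mult_minus_distrib_mat[OF X(2) Y] by simp
  also have "\<dots> = X * Y - X0 * Y0"
    using X Y by (intro eq_matI) auto
  finally have split: "X * Y - X0 * Y0 = (X - X0) * Y + X0 * (Y - Y0)" ..
  have "e * q \<le> q" using e pq by (simp add: mult_left_le_one_le)
  then have Y_le: "entry_norm Y \<le> q + entry_norm Y0"
    using entry_norm_le_diff_add[OF Y] dY by linarith
  have "entry_norm (X * Y - X0 * Y0)
      \<le> entry_norm (X - X0) * entry_norm Y + entry_norm X0 * entry_norm (Y - Y0)"
    unfolding split using X Y
    by (intro order.trans[OF entry_norm_add_le[of _ a c]] add_mono entry_norm_mult_le[of _ a b _ c]) auto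
  also have "\<dots> \<le> (e * p) * (q + entry_norm Y0) + entry_norm X0 * (e * q)"
    using dX dY Y_le e pq by (intro add_mono mult_mono mult_left_mono) (auto simp: entry_norm_nonneg)
  finally show ?thesis by (simp add: algebra_simps)
qed

lemma smoother_near_subdiagonal:
  fixes K B F Pi :: "'a :: real_normed_field mat"
  assumes K: "K \<in> carrier_mat n n" and B: "B \<in> carrier_mat n n"
    and F: "F \<in> carrier_mat n n" and Pi: "Pi \<in> carrier_mat n n"
    and inv: "(1\<^sub>m n - c \<cdot>\<^sub>m B) * Pi = 1\<^sub>m n"
    and c1: "norm c \<le> 1" and cB: "norm c * (real n * entry_norm B) \<le> 1/2"
  shows "entry_norm ((1\<^sub>m n - Pi * (1\<^sub>m n - c \<cdot>\<^sub>m K - F)) - F)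
    \<le> norm c * (entry_norm K + 2 * real n * entry_norm B * (real n + entry_norm K + entry_norm F))"
proof -
  define C where "C = 1\<^sub>m n - c \<cdot>\<^sub>m K - F"
  define Z where "Z = c \<cdot>\<^sub>m (B * Pi)"
  have C: "C \<in> carrier_mat n n" and Z: "Z \<in> carrier_mat n n"
    unfolding C_def Z_def using K F Pi B by auto
  have "Pi - Z = 1\<^sub>m n"
    using inv minus_mult_distrib_mat[OF one_carrier_mat smult_carrier_mat[OF B] Pi] Pi B
    unfolding Z_def by (simp add: mult_smult_assoc_mat)
  moreover have "Pi = (Pi - Z) + Z"
    using Pi Z by (intro eq_matI) auto
  ultimately have Pi_eq: "Pi = 1\<^sub>m n + Z" by simp
  have "entry_norm Pi \<le> 2 * real n"
    using entry_norm_inverse_perturbed_le[OF one_carrier_mat B one_carrier_mat Pi _ inv] cB by simp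
  then have Z_le: "entry_norm Z \<le> norm c * (2 * real n * entry_norm B)"
    unfolding Z_def using entry_norm_mult_le[OF B Pi]
    by (simp add: mult_left_mono mult_right_mono entry_norm_nonneg order.trans mult.commute)
  have "entry_norm C \<le> entry_norm (1\<^sub>m n - c \<cdot>\<^sub>m K) + entry_norm F"
    unfolding C_def using K F by (intro entry_norm_diff_le[of _ n n]) auto
  also have "entry_norm (1\<^sub>m n - c \<cdot>\<^sub>m K) \<le> real n + norm c * entry_norm K"
    using entry_norm_diff_le[of "1\<^sub>m n" n n "c \<cdot>\<^sub>m K"] K by simp
  also have "norm c * entry_norm K \<le> entry_norm K"
    by (rule mult_left_le_one_le[OF entry_norm_nonneg norm_ge_zero c1])
  finally have C_le: "entry_norm C \<le> real n + entry_norm K + entry_norm F" by simp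
  have "(1\<^sub>m n - Pi * C) - F = c \<cdot>\<^sub>m K - Z * C"
    unfolding Pi_eq add_mult_distrib_mat[OF one_carrier_mat Z C] unfolding C_def
    using K F Z by (intro eq_matI) auto
  then have "entry_norm ((1\<^sub>m n - Pi * C) - F) \<le> norm c * entry_norm K + entry_norm Z * entry_norm C"
    using entry_norm_diff_le[of "c \<cdot>\<^sub>m K" n n "Z * C"] entry_norm_mult_le[OF Z C] K Z C by simp
  also have "\<dots> \<le> norm c * entry_norm K
      + norm c * (2 * real n * entry_norm B) * (real n + entry_norm K + entry_norm F)"
    using Z_le C_le by (intro add_left_mono mult_mono) (auto simp: entry_norm_nonneg)
  finally show ?thesis unfolding C_def by (simp add: algebra_simps)
qed

lemma restriction_mult_collocation:
  fixes K F Bt Ft R :: "'a :: comm_ring_1 mat"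
  assumes K: "K \<in> carrier_mat n n" and F: "F \<in> carrier_mat n n"
    and Bt: "Bt \<in> carrier_mat m m" and Ft: "Ft \<in> carrier_mat m m" and R: "R \<in> carrier_mat m n"
    and comm: "Ft * R = R * F"
  shows "R * (1\<^sub>m n - c \<cdot>\<^sub>m K - F) = (1\<^sub>m m - c \<cdot>\<^sub>m Bt - Ft) * R + c \<cdot>\<^sub>m (Bt * R - R * K)"
proof -
  have "R * (1\<^sub>m n - c \<cdot>\<^sub>m K - F) = R - c \<cdot>\<^sub>m (R * K) - R * F"
    using mult_minus_distrib_mat[OF R minus_carrier_mat[OF smult_carrier_mat[OF K]] F]
      mult_minus_distrib_mat[OF R one_carrier_mat smult_carrier_mat[OF K]] R K
    by (simp add: mult_smult_distrib)
  moreover have "(1\<^sub>m m - c \<cdot>\<^sub>m Bt - Ft) * R = R - c \<cdot>\<^sub>m (Bt * R) - Ft * R"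
    using minus_mult_distrib_mat[OF minus_carrier_mat[OF smult_carrier_mat[OF Bt]] Ft R]
      minus_mult_distrib_mat[OF one_carrier_mat smult_carrier_mat[OF Bt] R] R Bt
    by (simp add: mult_smult_assoc_mat)
  ultimately show ?thesis
    unfolding comm using R K F Bt by (intro eq_matI) (auto simp: algebra_simps)
qed

lemma coarse_correction_near_projection:
  fixes K F Bt Ft G Ti P R :: "'a :: real_normed_field mat"
  assumes K: "K \<in> carrier_mat n n" and F: "F \<in> carrier_mat n n"
    and Bt: "Bt \<in> carrier_mat m m" and Ft: "Ft \<in> carrier_mat m m"
    and G: "G \<in> carrier_mat m m" and Ti: "Ti \<in> carrier_mat m m"
    and P: "P \<in> carrier_mat n m" and R: "R \<in> carrier_mat m n"
    and comm: "Ft * R = R * F"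
    and G_inv: "G * (1\<^sub>m m - Ft) = 1\<^sub>m m"
    and Ti_inv: "Ti * (1\<^sub>m m - c \<cdot>\<^sub>m Bt - Ft) = 1\<^sub>m m" "(1\<^sub>m m - c \<cdot>\<^sub>m Bt - Ft) * Ti = 1\<^sub>m m"
    and small: "norm c * (entry_norm G * entry_norm Bt) \<le> 1/2"
  shows "entry_norm ((1\<^sub>m n - P * Ti * R * (1\<^sub>m n - c \<cdot>\<^sub>m K - F)) - (1\<^sub>m n - P * R))
    \<le> norm c * (entry_norm P * (2 * entry_norm G)
        * (entry_norm Bt * entry_norm R + entry_norm R * entry_norm K))"
proof -
  define Pt where "Pt = 1\<^sub>m m - c \<cdot>\<^sub>m Bt - Ft"
  define C where "C = 1\<^sub>m n - c \<cdot>\<^sub>m K - F"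
  define V where "V = Bt * R - R * K"
  have Pt: "Pt \<in> carrier_mat m m" and C: "C \<in> carrier_mat n n" and V: "V \<in> carrier_mat m n"
    unfolding Pt_def C_def V_def using Bt Ft K F R by auto
  have "Pt = (1\<^sub>m m - Ft) - c \<cdot>\<^sub>m Bt"
    unfolding Pt_def using Bt Ft by (intro eq_matI) auto
  then have Ti_le: "entry_norm Ti \<le> 2 * entry_norm G"
    using entry_norm_inverse_perturbed_le[OF minus_carrier_mat[OF Ft] Bt G Ti G_inv _ small] Ti_inv(2)
    unfolding Pt_def by simp
  have "Ti * (R * C) = R + c \<cdot>\<^sub>m (Ti * V)"
    unfolding C_def V_def restriction_mult_collocation[OF K F Bt Ft R comm] Pt_def[symmetric]
      mult_add_distrib_mat[OF Ti mult_carrier_mat[OF Pt R] smult_carrier_mat[OF V[unfolded V_def]]]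
      assoc_mult_mat[OF Ti Pt R, symmetric] mult_smult_distrib[OF Ti V[unfolded V_def]]
    using Ti_inv(1) R unfolding Pt_def[symmetric] by simp
  moreover have "P * Ti * R * C = P * (Ti * (R * C))"
    using P Ti R C by (simp add: assoc_mult_mat[of _ n m _ m _ n] assoc_mult_mat[of _ n m _ n _ n])
  ultimately have "P * Ti * R * C = P * R + c \<cdot>\<^sub>m (P * (Ti * V))"
    using P Ti R V mult_smult_distrib[OF P mult_carrier_mat[OF Ti V]]
    by (simp add: mult_add_distrib_mat[OF P])
  then have "(1\<^sub>m n - P * Ti * R * C) - (1\<^sub>m n - P * R) = (- c) \<cdot>\<^sub>m (P * (Ti * V))"
    using P R Ti V by (intro eq_matI) auto
  moreover have "entry_norm V \<le> entry_norm Bt * entry_norm R + entry_norm R * entry_norm K"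
    unfolding V_def using entry_norm_diff_le[of "Bt * R" m n "R * K"] entry_norm_mult_le[OF Bt R]
      entry_norm_mult_le[OF R K] Bt R K by simp
  then have "entry_norm (Ti * V)
      \<le> (2 * entry_norm G) * (entry_norm Bt * entry_norm R + entry_norm R * entry_norm K)"
    using entry_norm_mult_le[OF Ti V] Ti_le by (meson entry_norm_nonneg mult_mono order.trans)
  then have "entry_norm (P * (Ti * V))
      \<le> entry_norm P * (2 * entry_norm G) * (entry_norm Bt * entry_norm R + entry_norm R * entry_norm K)"
    using entry_norm_mult_le[OF P mult_carrier_mat[OF Ti V]]
    by (metis entry_norm_nonneg mult.assoc mult_left_mono order.trans)
  ultimately show ?thesis
    unfolding C_def by (simp add: mult_left_mono)
qed

lemma spectral_radius_pow_le_of_nilpotent: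
  fixes T T0 :: "complex mat"
  assumes T: "T \<in> carrier_mat n n" and T0: "T0 \<in> carrier_mat n n" and n: "0 < n"
    and nil: "T0 ^\<^sub>m L = 0\<^sub>m n n" and close: "entry_norm (T - T0) \<le> d" and "d \<le> b"
  shows "spectral_radius T ^ L \<le> real L * real n * (1 + entry_norm T0 + b) ^ L * d"
proof -
  define S where "S = 1 + entry_norm T0 + b"
  have d: "0 \<le> d" using close order.trans[OF entry_norm_nonneg] by blast
  have S: "entry_norm T \<le> S" "entry_norm T0 \<le> S" "1 \<le> S"
    using entry_norm_le_diff_add[OF T T0] close \<open>d \<le> b\<close> d entry_norm_nonneg[of T0]
    unfolding S_def by linarith+
  have "X - 0\<^sub>m n n = X" if "X \<in> carrier_mat n n" for X :: "complex mat"
    using that by (intro eq_matI) auto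
  then have "T ^\<^sub>m L - T0 ^\<^sub>m L = T ^\<^sub>m L"
    unfolding nil using T by simp
  then have "spectral_radius T ^ L \<le> real L * real n * S ^ L * entry_norm (T - T0)"
    using spectral_radius_pow_le_entry_norm[OF T n, of L] entry_norm_pow_diff_le[OF T0 T S(2,1,3), of L]
    by simp
  also have "\<dots> \<le> real L * real n * S ^ L * d"
    using close S(3) by (intro mult_left_mono) auto
  finally show ?thesis unfolding S_def .
qed

lemma le_root_mult_of_pow_le:
  fixes r a mu :: real
  assumes L: "0 < L" and r: "0 \<le> r" and le: "r ^ L \<le> a * mu" and a: "0 \<le> a" and mu: "0 < mu"
  shows "r \<le> (a + 1) powr (1 / real L) * mu powr (1 / real L)"
proof -
  have "((a + 1) powr (1 / real L) * mu powr (1 / real L)) ^ L = (a + 1) * mu"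
    using L a mu by (simp add: power_mult_distrib powr_realpow[symmetric] powr_powr)
  moreover have "a * mu \<le> (a + 1) * mu" using mu by simp
  ultimately show ?thesis
    using le r L by (metis order.trans power_mono_iff powr_ge_zero zero_le_mult_iff)
qed

lemma small_of_less_inverse:
  fixes mu x y :: real
  assumes "0 \<le> x" "0 \<le> y" "0 < mu" "mu < 1 / (2 * (1 + x + y))"
  shows "mu \<le> 1" "mu * x \<le> 1/2" "mu * y \<le> 1/2"
proof -
  have "mu * (2 * (1 + x + y)) < 1"
    using assms by (simp add: less_divide_eq add_pos_nonneg)
  moreover have "mu * (2 * (1 + x + y)) = 2 * mu + 2 * (mu * x) + 2 * (mu * y)"
    by (simp add: algebra_simps)
  moreover have "0 \<le> mu * x" "0 \<le> mu * y"
    using assms by simp_all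
  ultimately show "mu \<le> 1" "mu * x \<le> 1/2" "mu * y \<le> 1/2"
    using assms(3) by linarith+
qed

definition smoother_iteration :: "nat \<Rightarrow> complex mat \<Rightarrow> complex mat \<Rightarrow> complex mat" where
  "smoother_iteration n P C = 1\<^sub>m n - minv P * C"

definition coarse_correction ::
  "nat \<Rightarrow> complex mat \<Rightarrow> complex mat \<Rightarrow> complex mat \<Rightarrow> complex mat \<Rightarrow> complex mat" where
  "coarse_correction n I P R C = 1\<^sub>m n - I * minv P * R * C"

lemma two_level_iteration_carrier_mat:
  assumes Ph: "Ph \<in> carrier_mat n n" "invertible_mat Ph" and Pt: "Pt \<in> carrier_mat m m" "invertible_mat Pt"
    and P: "P \<in> carrier_mat n m" and R: "R \<in> carrier_mat m n" and C: "C \<in> carrier_mat n n"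
  shows "smoother_iteration n Ph C * coarse_correction n P Pt R C \<in> carrier_mat n n"
  using invertible_mat_minv(1)[OF Ph] invertible_mat_minv(1)[OF Pt] P R C
  unfolding smoother_iteration_def coarse_correction_def by auto

lemma two_level_iteration_near_nilpotent:
  fixes K B F Bt Ft G P R :: "complex mat" and c :: complex
  assumes K: "K \<in> carrier_mat n n" and B: "B \<in> carrier_mat n n" and F: "F \<in> carrier_mat n n"
    and Bt: "Bt \<in> carrier_mat m m" and Ft: "Ft \<in> carrier_mat m m" and G: "G \<in> carrier_mat m m"
    and P: "P \<in> carrier_mat n m" and R: "R \<in> carrier_mat m n"
    and comm: "Ft * R = R * F" and G_inv: "G * (1\<^sub>m m - Ft) = 1\<^sub>m m"
    and inv: "invertible_mat (1\<^sub>m n - c \<cdot>\<^sub>m B)" "invertible_mat (1\<^sub>m m - c \<cdot>\<^sub>m Bt - Ft)"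
    and c1: "cmod c \<le> 1" and cB: "cmod c * (real n * entry_norm B) \<le> 1/2"
    and cG: "cmod c * (entry_norm G * entry_norm Bt) \<le> 1/2"
  defines "C \<equiv> 1\<^sub>m n - c \<cdot>\<^sub>m K - F"
    and "b1 \<equiv> entry_norm K + 2 * real n * entry_norm B * (real n + entry_norm K + entry_norm F)"
    and "b2 \<equiv> entry_norm P * (2 * entry_norm G)
                * (entry_norm Bt * entry_norm R + entry_norm R * entry_norm K)"
  shows "entry_norm (smoother_iteration n (1\<^sub>m n - c \<cdot>\<^sub>m B) C
             * coarse_correction n P (1\<^sub>m m - c \<cdot>\<^sub>m Bt - Ft) R C
           - F * (1\<^sub>m n - P * R))
         \<le> cmod c * (b1 * (b2 + entry_norm (1\<^sub>m n - P * R)) + entry_norm F * b2)"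
proof -
  have Ph: "1\<^sub>m n - c \<cdot>\<^sub>m B \<in> carrier_mat n n" and Pt: "1\<^sub>m m - c \<cdot>\<^sub>m Bt - Ft \<in> carrier_mat m m"
    using B Bt Ft by auto
  note Pi = invertible_mat_minv[OF Ph inv(1)] and Ti = invertible_mat_minv[OF Pt inv(2)]
  have smoother: "entry_norm (smoother_iteration n (1\<^sub>m n - c \<cdot>\<^sub>m B) C - F) \<le> cmod c * b1"
    unfolding smoother_iteration_def C_def b1_def
    by (rule smoother_near_subdiagonal[OF K B F Pi(1,3) c1 cB])
  have coarse:
    "entry_norm (coarse_correction n P (1\<^sub>m m - c \<cdot>\<^sub>m Bt - Ft) R C - (1\<^sub>m n - P * R)) \<le> cmod c * b2"
    unfolding coarse_correction_def C_def b2_def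
    by (rule coarse_correction_near_projection[OF K F Bt Ft G Ti(1) P R comm G_inv Ti(2,3) cG])
  show ?thesis
    using K F P R Pi(1) Ti(1) b1_def b2_def
    by (intro entry_norm_mult_diff_le[OF _ F _ _ smoother coarse])
      (auto simp: smoother_iteration_def coarse_correction_def C_def c1 entry_norm_nonneg)
qed

lemma subdiagonal_times_complement_nilpotent:
  fixes F P R :: "'a :: comm_ring_1 mat"
  assumes F: "F \<in> carrier_mat n n" and P: "P \<in> carrier_mat n m" and R: "R \<in> carrier_mat m n"
    and n: "n \<le> L * k" and "block_lower k k 1 F" "block_lower k kc 0 P" "block_lower kc k 0 R"
  shows "(F * (1\<^sub>m n - P * R)) ^\<^sub>m L = 0\<^sub>m n n"
proof -
  have "block_lower k k 0 (1\<^sub>m n - P * R)"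
    using block_lower_mult[OF P R assms(6,7)] P R
    by (intro block_lower_diff[of _ n n] block_lower_one) auto
  then have "block_lower k k 1 (F * (1\<^sub>m n - P * R))"
    using block_lower_mult[OF F minus_carrier_mat[OF mult_carrier_mat[OF P R]] assms(5)] by simp
  then show ?thesis
    using F P R n by (intro block_lower_pow_eq_zero[of _ n]) auto
qed

theorem two_level_iteration_spectral_radius_bound:
  fixes K B F Bt Ft P R :: "complex mat"
  assumes L: "0 < L" and k: "0 < k" and n: "n = L * k" and m: "m = L * kc"
    and K: "K \<in> carrier_mat n n" and B: "B \<in> carrier_mat n n" and F: "F \<in> carrier_mat n n"
    and Bt: "Bt \<in> carrier_mat m m" and Ft: "Ft \<in> carrier_mat m m"
    and P: "P \<in> carrier_mat n m" and R: "R \<in> carrier_mat m n"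
    and comm: "Ft * R = R * F"
    and F_lower: "block_lower k k 1 F" and Ft_lower: "block_lower kc kc 1 Ft"
    and P_lower: "block_lower k kc 0 P" and R_lower: "block_lower kc k 0 R"
  shows "\<exists>mu0 c. 0 < mu0 \<and> 0 < c \<and>
    (\<forall>mu. 0 < mu \<and> mu < mu0 \<and>
          invertible_mat (1\<^sub>m n - complex_of_real mu \<cdot>\<^sub>m B) \<and>
          invertible_mat (1\<^sub>m m - complex_of_real mu \<cdot>\<^sub>m Bt - Ft) \<longrightarrow>
      (let C = 1\<^sub>m n - complex_of_real mu \<cdot>\<^sub>m K - F
       in spectral_radius (smoother_iteration n (1\<^sub>m n - complex_of_real mu \<cdot>\<^sub>m B) C
            * coarse_correction n P (1\<^sub>m m - complex_of_real mu \<cdot>\<^sub>m Bt - Ft) R C)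
          \<le> c * mu powr (1 / real L)))"
proof -
  define T0 where "T0 = F * (1\<^sub>m n - P * R)"
  have T0: "T0 \<in> carrier_mat n n" unfolding T0_def using F P R by auto
  have nilpotent: "T0 ^\<^sub>m L = 0\<^sub>m n n"
    unfolding T0_def using n
    by (intro subdiagonal_times_complement_nilpotent[OF F P R _ F_lower P_lower R_lower]) simp
  obtain G where G: "G \<in> carrier_mat m m" "G * (1\<^sub>m m - Ft) = 1\<^sub>m m"
    using one_minus_block_lower_left_inverse[OF Ft Ft_lower] by blast
  define b1 where "b1 = entry_norm K + 2 * real n * entry_norm B * (real n + entry_norm K + entry_norm F)"
  define b2 where "b2 = entry_norm P * (2 * entry_norm G)
    * (entry_norm Bt * entry_norm R + entry_norm R * entry_norm K)"
  define b where "b = b1 * (b2 + entry_norm (1\<^sub>m n - P * R)) + entry_norm F * b2"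
  define a where "a = real L * real n * (1 + entry_norm T0 + b) ^ L * b"
  define mu0 where "mu0 = 1 / (2 * (1 + real n * entry_norm B + entry_norm G * entry_norm Bt))"
  have b: "0 \<le> b" unfolding b_def b1_def b2_def by (simp add: entry_norm_nonneg)
  then have a: "0 \<le> a" unfolding a_def by (simp add: entry_norm_nonneg)
  have "0 \<le> real n * entry_norm B" "0 \<le> entry_norm G * entry_norm Bt"
    by (simp_all add: entry_norm_nonneg)
  note small = small_of_less_inverse[OF this, folded mu0_def]
  have bound: "spectral_radius (smoother_iteration n (1\<^sub>m n - of_real mu \<cdot>\<^sub>m B) C
      * coarse_correction n P (1\<^sub>m m - of_real mu \<cdot>\<^sub>m Bt - Ft) R C)
    \<le> (a + 1) powr (1 / real L) * mu powr (1 / real L)"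
    if mu: "0 < mu" "mu < mu0" and C: "C = 1\<^sub>m n - of_real mu \<cdot>\<^sub>m K - F"
      and inv: "invertible_mat (1\<^sub>m n - of_real mu \<cdot>\<^sub>m B)" "invertible_mat (1\<^sub>m m - of_real mu \<cdot>\<^sub>m Bt - Ft)"
    for mu C
  proof -
    define T where "T = smoother_iteration n (1\<^sub>m n - of_real mu \<cdot>\<^sub>m B) C
      * coarse_correction n P (1\<^sub>m m - of_real mu \<cdot>\<^sub>m Bt - Ft) R C"
    have T: "T \<in> carrier_mat n n"
      unfolding T_def C using B Bt Ft K F P R inv by (intro two_level_iteration_carrier_mat) auto
    have close: "entry_norm (T - T0) \<le> mu * b"
      using two_level_iteration_near_nilpotent[OF K B F Bt Ft G(1) P R comm G(2) inv] small[OF mu] mu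
      unfolding T_def T0_def b_def b1_def b2_def C by simp
    have "mu * b \<le> b" using mult_left_le_one_le[OF b _ small(1)[OF mu]] mu by simp
    then have "spectral_radius T ^ L \<le> real L * real n * (1 + entry_norm T0 + b) ^ L * (mu * b)"
      using spectral_radius_pow_le_of_nilpotent[OF T T0 _ nilpotent close] n L k by simp
    then have "spectral_radius T ^ L \<le> a * mu"
      unfolding a_def by (simp add: algebra_simps)
    then show ?thesis
      unfolding T_def[symmetric] using spectral_radius_mem_max(1)[OF T] n L k a mu
      by (intro le_root_mult_of_pow_le) auto
  qed
  have "0 < mu0" unfolding mu0_def by (simp add: entry_norm_nonneg add_pos_nonneg)
  then show ?thesis
    using a bound unfolding Let_def
    by (intro exI[of _ mu0] exI[of _ "(a + 1) powr (1 / real L)"]) auto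
qed

theorem theorem2:
  fixes L M N Mc Nc :: nat
    and tau :: "nat \<Rightarrow> real"
    and QD QDc :: "real mat"
    and A Ac :: "complex mat"
    and TFCQ TFCA TCFQ TCFA :: "real mat"
  assumes "0 < L" and "0 < M" and "0 < N"
    and "Mc \<le> M" and "Nc \<le> N"
    and "gauss_radau_nodes M tau"
    and "QD \<in> carrier_mat M M" and "lower_triangular QD"
    and "QDc \<in> carrier_mat Mc Mc" and "lower_triangular QDc"
    and "A \<in> carrier_mat N N" and "Ac \<in> carrier_mat Nc Nc"
    and "TFCQ \<in> carrier_mat Mc M" and "TFCA \<in> carrier_mat Nc N"
    and "TCFQ \<in> carrier_mat M Mc" and "TCFA \<in> carrier_mat N Nc"
    and "kron (cmat (subdiag L)) (kron (cmat (last_col_ones Mc)) (1\<^sub>m Nc))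
           * kron (1\<^sub>m L) (kron (cmat TFCQ) (cmat TFCA))
         = kron (1\<^sub>m L) (kron (cmat TFCQ) (cmat TFCA))
           * kron (cmat (subdiag L)) (kron (cmat (last_col_ones M)) (1\<^sub>m N))"
  shows "\<exists>mu0 c :: real. 0 < mu0 \<and> 0 < c \<and>
    (\<forall>mu. 0 < mu \<and> mu < mu0 \<and>
          invertible_mat (prec_fine L M N QD A mu) \<and>
          invertible_mat (prec_coarse L Mc Nc QDc Ac mu) \<longrightarrow>
      (let C = coll_C L M N (coll_Q M tau) A mu;
           TS = 1\<^sub>m (L * M * N) - minv (prec_fine L M N QD A mu) * C;
           TCGC = 1\<^sub>m (L * M * N)
                  - kron (1\<^sub>m L) (kron (cmat TCFQ) (cmat TCFA))
                    * minv (prec_coarse L Mc Nc QDc Ac mu)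
                    * kron (1\<^sub>m L) (kron (cmat TFCQ) (cmat TFCA)) * C
       in spectral_radius (TS * TCGC) \<le> c * mu powr (1 / real L)))"
proof -
  have Y: "kron (cmat (last_col_ones M)) (1\<^sub>m N) \<in> carrier_mat (M * N) (M * N)"
    and Yc: "kron (cmat (last_col_ones Mc)) (1\<^sub>m Nc) \<in> carrier_mat (Mc * Nc) (Mc * Nc)"
    by (intro kron_carrier_mat cmat_carrier_mat last_col_ones_carrier_mat one_carrier_mat)+
  have TCF: "kron (cmat TCFQ) (cmat TCFA) \<in> carrier_mat (M * N) (Mc * Nc)"
    and TFC: "kron (cmat TFCQ) (cmat TFCA) \<in> carrier_mat (Mc * Nc) (M * N)"
    using kron_carrier_mat[OF cmat_carrier_mat[OF assms(15)] cmat_carrier_mat[OF assms(16)]]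
      kron_carrier_mat[OF cmat_carrier_mat[OF assms(13)] cmat_carrier_mat[OF assms(14)]] .
  have collocation: "kron (kron (1\<^sub>m L) (cmat X)) Z \<in> carrier_mat (L * K * K') (L * K * K')"
    if "X \<in> carrier_mat K K" "Z \<in> carrier_mat K' K'" for X :: "real mat" and Z :: "complex mat" and K K'
    using kron_carrier_mat[OF kron_carrier_mat[OF one_carrier_mat cmat_carrier_mat[OF that(1)]] that(2)] .
  have lower_diag: "kron (cmat (subdiag L)) Z \<in> carrier_mat (L * K * K') (L * K * K')"
    if "Z \<in> carrier_mat (K * K') (K * K')" for Z :: "complex mat" and K K'
    using kron_carrier_mat[OF cmat_carrier_mat[OF subdiag_carrier_mat] that] by (simp only: mult.assoc)
  have transfer: "kron (1\<^sub>m L) Z \<in> carrier_mat (L * K * K') (L * J * J')"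
    if "Z \<in> carrier_mat (K * K') (J * J')" for Z :: "complex mat" and K K' J J'
    using kron_carrier_mat[OF one_carrier_mat that] by (simp only: mult.assoc)
  have "0 < M * N" "L * M * N = L * (M * N)" "L * Mc * Nc = L * (Mc * Nc)"
    using assms(2,3) by simp_all
  note bound = two_level_iteration_spectral_radius_bound[OF assms(1) this
      collocation[OF coll_Q_carrier_mat[of M tau] assms(11)] collocation[OF assms(7,11)] lower_diag[OF Y]
      collocation[OF assms(9,12)] lower_diag[OF Yc] transfer[OF TCF] transfer[OF TFC] assms(17)
      block_lower_kron_subdiag[OF Y] block_lower_kron_subdiag[OF Yc]
      block_lower_kron_one[of "kron (cmat TCFQ) (cmat TCFA)" L, unfolded carrier_matD[OF TCF]]
      block_lower_kron_one[of "kron (cmat TFCQ) (cmat TFCA)" L, unfolded carrier_matD[OF TFC]]]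
  show ?thesis
    using bound
    unfolding prec_fine_def prec_coarse_def coll_C_def smoother_iteration_def coarse_correction_def
      Let_def .
qed

end
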